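(* For every bipartite graph $G$ there is a monotone CNF-formula $F$ whose incidence graph is $G$ and such that $\mathbf{psw}(F)\ge 2^{\mathbf{mimw}(G)/2}$.
   Context: A CNF-formula is monotone if all literals are positive. Its incidence graph $I(F)$ is the bipartite graph on $\mathrm{var}(F)\cup\mathrm{cla}(F)$ with $x\sim C$ iff $x$ occurs in $C$. A branch decomposition $(T,\delta)$ of a graph $G$ is a tree with maximum degree $3$ and a bijection from its leaves to $V(G)$; each node $x$ of $T$ (rooted) yields the cut $(A,\bar A)$, $A$ = labels of leaves below $x$. For a symmetric $f$ on cuts, the $f$-width of $(T,\delta)$ is the max of $f$ over its cuts and the $f$-branch width of $G$ is the min over branch decompositions. $\mathbf{mimw}(G)$ is the $f$-branch width for $f(A,\bar A)$ = size of a maximum induced matching in the graph $G[A,\bar A]$ (vertex set $V(G)$, edges of $G$ between $A$ and $\bar A$). For a CNF $F$, a set $\mathcal C$ of clauses is precisely satisfiable if some assignment satisfies exactly the clauses in $\mathcal C$; the PS-value of $F$ is the number of precisely satisfiable clause sets. For $X\subseteq\mathrm{var}(F)$ and $\mathcal C\subseteq\mathrm{cla}(F)$, $F_{X,\mathcal C}$ is obtained by deleting all clauses not in $\mathcal C$ and then all variables not in $X$ from the remaining clauses. For a cut $(A,\bar A)$ of $I(F)$ with $X=A\cap\mathrm{var}(F)$, $\bar X=\bar A\cap\mathrm{var}(F)$, $\mathcal C=A\cap\mathrm{cla}(F)$, $\bar{\mathcal C}=\bar A\cap\mathrm{cla}(F)$, let $ps(A,\bar A)$ be the maximum of the PS-values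 of $F_{X,\bar{\mathcal C}}$ and $F_{\bar X,\mathcal C}$. $\mathbf{psw}(F)$ is the $ps$-branch width of $I(F)$. *)

theory Defs
  imports Complex_Main
begin

definition simple_graph :: "'v set \<Rightarrow> ('v \<Rightarrow> 'v \<Rightarrow> bool) \<Rightarrow> bool" where
  "simple_graph V E \<longleftrightarrow> finite V \<and> (\<forall>u v. E u v \<longrightarrow> E v u) \<and> (\<forall>u. \<not> E u u)
     \<and> (\<forall>u v. E u v \<longrightarrow> u \<in> V \<and> v \<in> V)"

definition bipartite :: "'v set \<Rightarrow> ('v \<Rightarrow> 'v \<Rightarrow> bool) \<Rightarrow> bool" where
  "bipartite V E \<longleftrightarrow> (\<exists>P. P \<subseteq> V \<and> (\<forall>u v. E u v \<longrightarrow> (u \<in> P \<longleftrightarrow> v \<notin> P)))"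

definition induced_matching :: "'v set \<Rightarrow> ('v \<Rightarrow> 'v \<Rightarrow> bool) \<Rightarrow> 'v set set \<Rightarrow> bool" where
  "induced_matching V E M \<longleftrightarrow>
     M \<subseteq> {{u, v} | u v. u \<in> V \<and> v \<in> V \<and> E u v}
     \<and> (\<forall>e\<in>M. \<forall>e'\<in>M. e \<noteq> e' \<longrightarrow> e \<inter> e' = {})
     \<and> (\<forall>e\<in>M. \<forall>e'\<in>M. e \<noteq> e' \<longrightarrow> \<not> (\<exists>u\<in>e. \<exists>v\<in>e'. E u v))"

definition cut_edges :: "('v \<Rightarrow> 'v \<Rightarrow> bool) \<Rightarrow> 'v set \<Rightarrow> 'v \<Rightarrow> 'v \<Rightarrow> bool" where
  "cut_edges E A u v \<longleftrightarrow> E u v \<and> (u \<in> A \<longleftrightarrow> v \<notin> A)"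

definition mim :: "'v set \<Rightarrow> ('v \<Rightarrow> 'v \<Rightarrow> bool) \<Rightarrow> 'v set \<Rightarrow> nat" where
  "mim V E A = Max {card M | M. induced_matching V (cut_edges E A) M}"

text \<open>A rooted tree; \<open>Leaf v\<close> are the leaves of T carrying the label \<open>\<delta>\<close>.\<close>
datatype 'v dtree = Leaf 'v | Inner "'v dtree list"

fun leaves :: "'v dtree \<Rightarrow> 'v list" where
  "leaves (Leaf v) = [v]"
| "leaves (Inner ts) = concat (map leaves ts)"

fun subtrees :: "'v dtree \<Rightarrow> 'v dtree set" where
  "subtrees (Leaf v) = {Leaf v}"
| "subtrees (Inner ts) = insert (Inner ts) (\<Union>t\<in>set ts. subtrees t)"

text \<open>Max degree 3: a non-root inner node has 1 or 2 children (degree 2 or 3);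
  the root, if inner, has 2 or 3 children (so it is not a leaf of T).\<close>
fun nonroot_ok :: "'v dtree \<Rightarrow> bool" where
  "nonroot_ok (Leaf v) = True"
| "nonroot_ok (Inner ts) = (length ts \<in> {1, 2} \<and> (\<forall>t\<in>set ts. nonroot_ok t))"

fun root_ok :: "'v dtree \<Rightarrow> bool" where
  "root_ok (Leaf v) = True"
| "root_ok (Inner ts) = (length ts \<in> {2, 3} \<and> (\<forall>t\<in>set ts. nonroot_ok t))"

definition branch_decomp :: "'v set \<Rightarrow> 'v dtree \<Rightarrow> bool" where
  "branch_decomp V T \<longleftrightarrow> root_ok T \<and> distinct (leaves T) \<and> set (leaves T) = V"

text \<open>The cuts (A, V - A) of T, given by their side A = leaf labels below a node.\<close>
definition cuts :: "'v dtree \<Rightarrow> 'v set set" where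
  "cuts T = {set (leaves s) | s. s \<in> subtrees T}"

text \<open>f A stands for f(A, V - A).\<close>
definition f_width :: "('v set \<Rightarrow> nat) \<Rightarrow> 'v dtree \<Rightarrow> nat" where
  "f_width f T = Max (f ` cuts T)"

definition f_branchwidth :: "'v set \<Rightarrow> ('v set \<Rightarrow> nat) \<Rightarrow> nat" where
  "f_branchwidth V f = Min {f_width f T | T. branch_decomp V T}"

definition mimw :: "'v set \<Rightarrow> ('v \<Rightarrow> 'v \<Rightarrow> bool) \<Rightarrow> nat" where
  "mimw V E = f_branchwidth V (mim V E)"

text \<open>A CNF formula with variables and (named) clauses; \<open>lits F C\<close> is the set of literals
  of clause C, a literal being (x, True) for x and (x, False) for the negation of x.
  Variables and clauses are both drawn from type 'v, so that the incidence graph lives on 'v.\<close>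
record 'v cnf =
  vars :: "'v set"
  clas :: "'v set"
  lits :: "'v \<Rightarrow> ('v \<times> bool) set"

definition cnf_wf :: "'v cnf \<Rightarrow> bool" where
  "cnf_wf F \<longleftrightarrow> finite (vars F) \<and> finite (clas F) \<and> vars F \<inter> clas F = {}
     \<and> (\<forall>C\<in>clas F. lits F C \<subseteq> vars F \<times> UNIV)"

definition monotone_cnf :: "'v cnf \<Rightarrow> bool" where
  "monotone_cnf F \<longleftrightarrow> (\<forall>C\<in>clas F. \<forall>(x, b)\<in>lits F C. b)"

definition occurs :: "'v cnf \<Rightarrow> 'v \<Rightarrow> 'v \<Rightarrow> bool" where
  "occurs F x C \<longleftrightarrow> (\<exists>b. (x, b) \<in> lits F C)"

definition inc_edge :: "'v cnf \<Rightarrow> 'v \<Rightarrow> 'v \<Rightarrow> bool" where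
  "inc_edge F u v \<longleftrightarrow>
     (u \<in> vars F \<and> v \<in> clas F \<and> occurs F u v) \<or> (v \<in> vars F \<and> u \<in> clas F \<and> occurs F v u)"

definition sat_clause :: "('v \<Rightarrow> bool) \<Rightarrow> ('v \<times> bool) set \<Rightarrow> bool" where
  "sat_clause \<alpha> L \<longleftrightarrow> (\<exists>(x, b)\<in>L. \<alpha> x = b)"

definition ps_value :: "'v cnf \<Rightarrow> nat" where
  "ps_value F = card {{C \<in> clas F. sat_clause \<alpha> (lits F C)} | \<alpha>. True}"

definition restrict_cnf :: "'v cnf \<Rightarrow> 'v set \<Rightarrow> 'v set \<Rightarrow> 'v cnf" where
  "restrict_cnf F X Cs = \<lparr>vars = X, clas = Cs, lits = (\<lambda>C. {(x, b) \<in> lits F C. x \<in> X})\<rparr>"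

definition ps :: "'v cnf \<Rightarrow> 'v set \<Rightarrow> nat" where
  "ps F A = max (ps_value (restrict_cnf F (A \<inter> vars F) (clas F - A)))
                (ps_value (restrict_cnf F (vars F - A) (A \<inter> clas F)))"

definition psw :: "'v cnf \<Rightarrow> nat" where
  "psw F = f_branchwidth (vars F \<union> clas F) (ps F)"

end

theory Submission
  imports Defs
begin

(* Fix a bipartition (P, V - P) of G and let F be the monotone CNF whose
   variables are P, whose clauses are V - P, and where clause C contains x iff x C is an
   edge; its incidence graph is G.  For a cut (A, V - A) take a maximum induced matching
   of G[A, V - A] and orient each matching edge as a pair (variable, clause).  The pairs
   whose variable lies in A form an "induced matching" between variables of A and clauses
   outside A; assigning true to any subset of their variables satisfies exactly the
   matching clauses of that subset, so F restricted to this side has PS-value at least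
   2^k.  The same holds on the other side, and one side carries at least half of the
   matching, whence ps(A) >= 2^(mim(A)/2).  Finally a general transfer lemma lifts a
   cut-wise inequality  phi(f A) <= g A  (phi monotone) to branch widths. *)

section \<open>Lower bounds for PS-values\<close>

lemma monotone_restrict_cnf:
  assumes "monotone_cnf F" and "Cs \<subseteq> clas F"
  shows "monotone_cnf (restrict_cnf F X Cs)"
  using assms by (fastforce simp: monotone_cnf_def restrict_cnf_def)

text \<open>If a monotone formula contains variable/clause pairs (x, C) such that the variable of
  one pair occurs in the clause of another pair only when the pairs coincide, then every
  subset of the pairs is realised as a precisely satisfiable clause set (set exactly the
  chosen variables to true), so the PS-value is at least 2 to the number of pairs.\<close>
lemma ps_value_ge_pow_matching:
  fixes G :: "'v cnf" and N :: "('v \<times> 'v) set"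
  assumes fin: "finite (clas G)" "finite N"
    and mono: "monotone_cnf G"
    and cla: "snd ` N \<subseteq> clas G"
    and match: "\<forall>p\<in>N. \<forall>q\<in>N. (fst q, True) \<in> lits G (snd p) \<longleftrightarrow> q = p"
  shows "2 ^ card N \<le> ps_value G"
proof -
  define sat where "sat S = {C \<in> clas G. sat_clause (\<lambda>x. x \<in> fst ` S) (lits G C)}"
    for S :: "('v \<times> 'v) set"
  have sat_iff: "snd p \<in> sat S \<longleftrightarrow> p \<in> S" if "p \<in> N" "S \<subseteq> N" for p S
  proof -
    have pos: "b" if "(x, b) \<in> lits G (snd p)" for x b
      using mono cla \<open>p \<in> N\<close> that unfolding monotone_cnf_def by fastforce
    have "sat_clause (\<lambda>x. x \<in> fst ` S) (lits G (snd p)) \<longleftrightarrow> (\<exists>q\<in>S. (fst q, True) \<in> lits G (snd p))"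
    proof
      assume "sat_clause (\<lambda>x. x \<in> fst ` S) (lits G (snd p))"
      then obtain x b where xb: "(x, b) \<in> lits G (snd p)" "(x \<in> fst ` S) = b"
        unfolding sat_clause_def by auto
      then have "b" using pos by simp
      then obtain q where "q \<in> S" "x = fst q" using xb(2) by auto
      then show "\<exists>q\<in>S. (fst q, True) \<in> lits G (snd p)" using xb(1) \<open>b\<close> by auto
    next
      assume "\<exists>q\<in>S. (fst q, True) \<in> lits G (snd p)"
      then show "sat_clause (\<lambda>x. x \<in> fst ` S) (lits G (snd p))"
        unfolding sat_clause_def by (auto intro: bexI[of _ "(fst _, True)"])
    qed
    also have "\<dots> \<longleftrightarrow> p \<in> S"
    proof
      assume "\<exists>q\<in>S. (fst q, True) \<in> lits G (snd p)"
      then obtain q where "q \<in> S" "(fst q, True) \<in> lits G (snd p)" by blast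
      moreover have "q = p" using match \<open>p \<in> N\<close> \<open>S \<subseteq> N\<close> calculation by blast
      ultimately show "p \<in> S" by simp
    next
      assume "p \<in> S"
      moreover have "(fst p, True) \<in> lits G (snd p)" using match \<open>p \<in> N\<close> by blast
      ultimately show "\<exists>q\<in>S. (fst q, True) \<in> lits G (snd p)" by blast
    qed
    finally show ?thesis
      using cla that by (auto simp: sat_def)
  qed
  have "inj_on sat (Pow N)"
  proof (rule inj_onI)
    fix S S' assume "S \<in> Pow N" "S' \<in> Pow N" "sat S = sat S'"
    then show "S = S'" using sat_iff[of _ S] sat_iff[of _ S'] by blast
  qed
  then have "2 ^ card N = card (sat ` Pow N)"
    by (simp add: card_image card_Pow fin(2))
  also have "\<dots> \<le> ps_value G"
    unfolding ps_value_def
  proof (rule card_mono)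
    show "finite {{C \<in> clas G. sat_clause \<alpha> (lits G C)} |\<alpha>. True}"
      by (rule finite_subset[of _ "Pow (clas G)"]) (auto simp: fin)
    show "sat ` Pow N \<subseteq> {{C \<in> clas G. sat_clause \<alpha> (lits G C)} |\<alpha>. True}"
      by (auto simp: sat_def)
  qed
  finally show ?thesis .
qed

section \<open>The monotone CNF of a bipartite graph\<close>

definition bipartite_cnf :: "'v set \<Rightarrow> ('v \<Rightarrow> 'v \<Rightarrow> bool) \<Rightarrow> 'v set \<Rightarrow> 'v cnf" where
  "bipartite_cnf V E P = \<lparr>vars = P, clas = V - P, lits = (\<lambda>C. {(x, True) | x. x \<in> P \<and> E x C})\<rparr>"

lemma bipartite_cnf_properties:
  assumes "simple_graph V E" and "P \<subseteq> V" and bip: "\<forall>u v. E u v \<longrightarrow> (u \<in> P \<longleftrightarrow> v \<notin> P)"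
  defines "F \<equiv> bipartite_cnf V E P"
  shows "cnf_wf F" and "monotone_cnf F" and "vars F \<union> clas F = V"
    and "\<forall>u v. inc_edge F u v \<longleftrightarrow> E u v"
proof -
  from assms(1) have "finite V" and sym: "\<And>u v. E u v \<Longrightarrow> E v u"
    and inV: "\<And>u v. E u v \<Longrightarrow> u \<in> V \<and> v \<in> V" by (auto simp: simple_graph_def)
  then show "cnf_wf F"
    using \<open>P \<subseteq> V\<close> by (auto simp: F_def bipartite_cnf_def cnf_wf_def intro: finite_subset)
  show "monotone_cnf F" by (auto simp: F_def bipartite_cnf_def monotone_cnf_def)
  show "vars F \<union> clas F = V" using \<open>P \<subseteq> V\<close> by (auto simp: F_def bipartite_cnf_def)
  show "\<forall>u v. inc_edge F u v \<longleftrightarrow> E u v"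
    using bip sym inV by (auto simp: F_def bipartite_cnf_def inc_edge_def occurs_def)
qed

text \<open>An oriented induced matching of the cut graph G[A, V - A]: variable/clause pairs that
  are cut edges, such that no cut edge joins the variable of one pair to the clause of
  another.\<close>
definition cross_matching ::
    "'v set \<Rightarrow> ('v \<Rightarrow> 'v \<Rightarrow> bool) \<Rightarrow> 'v set \<Rightarrow> 'v set \<Rightarrow> ('v \<times> 'v) set \<Rightarrow> bool" where
  "cross_matching V E P A N \<longleftrightarrow> finite N
     \<and> (\<forall>p\<in>N. fst p \<in> P \<and> snd p \<in> V - P \<and> cut_edges E A (fst p) (snd p))
     \<and> (\<forall>p\<in>N. \<forall>q\<in>N. p \<noteq> q \<longrightarrow> \<not> cut_edges E A (fst q) (snd p))"

lemma mim_attained: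
  assumes "finite V"
  obtains M where "induced_matching V (cut_edges E A) M" and "card M = mim V E A" and "finite M"
proof -
  let ?S = "{card M | M. induced_matching V (cut_edges E A) M}"
  have sub: "M \<subseteq> Pow V" if "induced_matching V (cut_edges E A) M" for M
  proof -
    have "M \<subseteq> {{u, v} | u v. u \<in> V \<and> v \<in> V \<and> cut_edges E A u v}"
      using that unfolding induced_matching_def by (rule conjunct1)
    also have "\<dots> \<subseteq> Pow V" by blast
    finally show ?thesis .
  qed
  have "?S \<subseteq> card ` Pow (Pow V)" using sub by blast
  then have "finite ?S" using assms by (meson finite_Pow_iff finite_imageI finite_subset)
  moreover have "induced_matching V (cut_edges E A) {}" by (simp add: induced_matching_def)
  then have "?S \<noteq> {}" by blast
  ultimately have "mim V E A \<in> ?S" unfolding mim_def by (rule Max_in)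
  then obtain M where M: "induced_matching V (cut_edges E A) M" "card M = mim V E A"
    by auto
  moreover have "finite M" using sub[OF M(1)] assms by (meson finite_Pow_iff finite_subset)
  ultimately show ?thesis using that by blast
qed

text \<open>In a bipartite graph every induced matching of a cut graph can be oriented from the
  side P to the other side; orientation is injective since an edge is the set of its ends.\<close>
lemma induced_matching_orient:
  assumes sym: "\<forall>u v. E u v \<longrightarrow> E v u" and bip: "\<forall>u v. E u v \<longrightarrow> (u \<in> P \<longleftrightarrow> v \<notin> P)"
    and M: "induced_matching V (cut_edges E A) M" and "finite M"
  obtains N where "cross_matching V E P A N" and "card N = card M"
proof -
  define oriented where "oriented e p \<longleftrightarrow> e = {fst p, snd p} \<and> fst p \<in> P \<and> snd p \<in> V - P
      \<and> cut_edges E A (fst p) (snd p)" for e and p :: "'a \<times> 'a"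
  have "\<forall>e\<in>M. \<exists>p. oriented e p"
  proof
    fix e assume "e \<in> M"
    have "e \<in> {{u, v} | u v. u \<in> V \<and> v \<in> V \<and> cut_edges E A u v}"
      using M \<open>e \<in> M\<close> unfolding induced_matching_def by (meson subsetD)
    then obtain u w where uw: "e = {u, w}" "u \<in> V" "w \<in> V" "cut_edges E A u w"
      by blast
    then have wu: "cut_edges E A w u" "e = {w, u}" using sym by (auto simp: cut_edges_def)
    have sides: "u \<in> P \<longleftrightarrow> w \<notin> P"
      using bip uw(4) by (simp add: cut_edges_def)
    show "\<exists>p. oriented e p"
    proof (cases "u \<in> P")
      case True
      then have "oriented e (u, w)" using uw sides by (simp add: oriented_def)
      then show ?thesis ..
    next
      case False
      then have "oriented e (w, u)" using uw wu sides by (simp add: oriented_def)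
      then show ?thesis ..
    qed
  qed
  then obtain or where or: "\<And>e. e \<in> M \<Longrightarrow> oriented e (or e)"
    using bchoice by meson
  have inj: "inj_on or M"
  proof (rule inj_onI)
    fix e e' assume "e \<in> M" "e' \<in> M" "or e = or e'"
    then show "e = e'" using or[of e] or[of e'] by (simp add: oriented_def)
  qed
  have separated: "\<forall>e\<in>M. \<forall>e'\<in>M. e \<noteq> e' \<longrightarrow> \<not> (\<exists>u\<in>e. \<exists>v\<in>e'. cut_edges E A u v)"
    using M by (simp add: induced_matching_def)
  have "\<forall>p\<in>or ` M. \<forall>q\<in>or ` M. p \<noteq> q \<longrightarrow> \<not> cut_edges E A (fst q) (snd p)"
  proof (intro ballI impI)
    fix p q assume "p \<in> or ` M" "q \<in> or ` M" "p \<noteq> q"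
    then obtain e f where ef: "e \<in> M" "f \<in> M" "p = or e" "q = or f" "e \<noteq> f" by blast
    then have "fst q \<in> f" "snd p \<in> e"
      using or[of e] or[of f] by (auto simp: oriented_def)
    then show "\<not> cut_edges E A (fst q) (snd p)"
      using separated ef by blast
  qed
  moreover have "\<forall>p\<in>or ` M. fst p \<in> P \<and> snd p \<in> V - P \<and> cut_edges E A (fst p) (snd p)"
    using or by (simp add: oriented_def)
  ultimately have "cross_matching V E P A (or ` M)"
    using \<open>finite M\<close> by (simp add: cross_matching_def)
  moreover have "card (or ` M) = card M" using card_image[OF inj] .
  ultimately show ?thesis using that by blast
qed

lemma cross_matchingD:
  assumes "cross_matching V E P A N"
  shows "finite N"
    and "p \<in> N \<Longrightarrow> fst p \<in> P \<and> snd p \<in> V - P \<and> cut_edges E A (fst p) (snd p)"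
    and "p \<in> N \<Longrightarrow> q \<in> N \<Longrightarrow> p \<noteq> q \<Longrightarrow> \<not> cut_edges E A (fst q) (snd p)"
  using assms unfolding cross_matching_def by blast+

lemma ps_value_side_ge:
  assumes "finite V" and N: "cross_matching V E P A N" and "N' \<subseteq> N"
    and "fst ` N' \<subseteq> X" and "snd ` N' \<subseteq> Cs" and "Cs \<subseteq> V - P"
    and opposite: "\<forall>x\<in>X. \<forall>C\<in>Cs. x \<in> A \<longleftrightarrow> C \<notin> A"
  shows "2 ^ card N' \<le> ps_value (restrict_cnf (bipartite_cnf V E P) X Cs)"
proof (rule ps_value_ge_pow_matching)
  let ?F = "bipartite_cnf V E P"
  have lits: "(x, True) \<in> lits (restrict_cnf ?F X Cs) C \<longleftrightarrow> x \<in> P \<and> E x C \<and> x \<in> X" for x C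
    by (simp add: restrict_cnf_def bipartite_cnf_def)
  show "finite (clas (restrict_cnf ?F X Cs))"
    using \<open>finite V\<close> \<open>Cs \<subseteq> V - P\<close> finite_subset by (fastforce simp: restrict_cnf_def)
  show "finite N'" using cross_matchingD(1)[OF N] \<open>N' \<subseteq> N\<close> by (rule finite_subset[rotated])
  have "monotone_cnf ?F" by (simp add: monotone_cnf_def bipartite_cnf_def)
  then show "monotone_cnf (restrict_cnf ?F X Cs)"
    using \<open>Cs \<subseteq> V - P\<close> by (intro monotone_restrict_cnf) (simp_all add: bipartite_cnf_def)
  show "snd ` N' \<subseteq> clas (restrict_cnf ?F X Cs)"
    using \<open>snd ` N' \<subseteq> Cs\<close> by (simp add: restrict_cnf_def)
  show "\<forall>p\<in>N'. \<forall>q\<in>N'. (fst q, True) \<in> lits (restrict_cnf ?F X Cs) (snd p) \<longleftrightarrow> q = p"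
  proof (intro ballI)
    fix p q assume "p \<in> N'" "q \<in> N'"
    then have pq: "p \<in> N" "q \<in> N" "fst q \<in> X" "snd p \<in> Cs"
      using assms(3-5) by auto
    have "q \<noteq> p \<Longrightarrow> \<not> E (fst q) (snd p)"
      using cross_matchingD(3)[OF N pq(1,2)] opposite pq(3,4) by (auto simp: cut_edges_def)
    moreover have "fst p \<in> P" "E (fst p) (snd p)"
      using cross_matchingD(2)[OF N pq(1)] by (auto simp: cut_edges_def)
    ultimately show "(fst q, True) \<in> lits (restrict_cnf ?F X Cs) (snd p) \<longleftrightarrow> q = p"
      unfolding lits using pq(3) by auto
  qed
qed

text \<open>The matching pairs split by the side of their variable; the larger half is at least
  mim(A)/2 and bounds one of the two PS-values in the definition of ps.\<close>
lemma ps_ge_mim: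
  assumes "simple_graph V E" and bip: "\<forall>u v. E u v \<longrightarrow> (u \<in> P \<longleftrightarrow> v \<notin> P)"
  shows "2 powr (real (mim V E A) / 2) \<le> real (ps (bipartite_cnf V E P) A)"
proof -
  let ?F = "bipartite_cnf V E P"
  have "finite V" and sym: "\<forall>u v. E u v \<longrightarrow> E v u"
    using assms(1) by (simp_all add: simple_graph_def)
  obtain M where M: "induced_matching V (cut_edges E A) M" "card M = mim V E A" "finite M"
    using mim_attained[OF \<open>finite V\<close>] by blast
  then obtain N where N: "cross_matching V E P A N" and cardN: "card N = mim V E A"
    using induced_matching_orient[OF sym bip] by metis
  define N1 where "N1 = {p \<in> N. fst p \<in> A}"
  define N2 where "N2 = {p \<in> N. fst p \<notin> A}"
  have cut: "fst p \<in> P \<and> snd p \<in> V - P \<and> (fst p \<in> A \<longleftrightarrow> snd p \<notin> A)" if "p \<in> N" for p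
    using cross_matchingD(2)[OF N that] by (simp add: cut_edges_def)
  have "2 ^ card N1 \<le> ps_value (restrict_cnf ?F (A \<inter> vars ?F) (clas ?F - A))"
    using cut by (intro ps_value_side_ge[OF \<open>finite V\<close> N]) (auto simp: N1_def bipartite_cnf_def)
  moreover have "2 ^ card N2 \<le> ps_value (restrict_cnf ?F (vars ?F - A) (A \<inter> clas ?F))"
    using cut by (intro ps_value_side_ge[OF \<open>finite V\<close> N]) (auto simp: N2_def bipartite_cnf_def)
  ultimately have "(2::nat) ^ max (card N1) (card N2) \<le> ps ?F A"
    unfolding ps_def by (auto simp: max_def)
  then have ps_bound: "(2::real) ^ max (card N1) (card N2) \<le> real (ps ?F A)"
    by (metis of_nat_le_iff of_nat_numeral of_nat_power)
  have "N = N1 \<union> N2" "N1 \<inter> N2 = {}" by (auto simp: N1_def N2_def)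
  moreover have "finite N1" "finite N2"
    using cross_matchingD(1)[OF N] by (simp_all add: N1_def N2_def)
  ultimately have "card N = card N1 + card N2" by (metis card_Un_disjoint)
  then have "2 powr (real (mim V E A) / 2) \<le> 2 powr real (max (card N1) (card N2))"
    using cardN by (intro powr_mono) auto
  also have "\<dots> = 2 ^ max (card N1) (card N2)" by (simp add: powr_realpow)
  finally show ?thesis using ps_bound by linarith
qed

section \<open>Branch decompositions\<close>

lemma leaves_subtree: "s \<in> subtrees T \<Longrightarrow> set (leaves s) \<subseteq> set (leaves T)"
  by (induction T) auto

lemma subtrees_self: "T \<in> subtrees T"
  by (cases T) auto

lemma cuts_subset: "branch_decomp V T \<Longrightarrow> cuts T \<subseteq> Pow V"
  using leaves_subtree by (fastforce simp: cuts_def branch_decomp_def)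

lemma cuts_finite: "branch_decomp V T \<Longrightarrow> finite V \<Longrightarrow> finite (cuts T)"
  using cuts_subset finite_subset finite_Pow_iff by metis

lemma cuts_nonempty: "cuts T \<noteq> {}"
  unfolding cuts_def using subtrees_self by blast

lemma width_attained: "branch_decomp V T \<Longrightarrow> finite V \<Longrightarrow> f_width f T \<in> f ` cuts T"
  unfolding f_width_def by (rule Max_in) (simp_all add: cuts_finite cuts_nonempty)

lemma width_ge: "branch_decomp V T \<Longrightarrow> finite V \<Longrightarrow> A \<in> cuts T \<Longrightarrow> f A \<le> f_width f T"
  unfolding f_width_def by (rule Max_ge) (simp_all add: cuts_finite)

fun caterpillar :: "'v list \<Rightarrow> 'v dtree" where
  "caterpillar [] = Inner []"
| "caterpillar [x] = Leaf x"
| "caterpillar (x # y # zs) = Inner [Leaf x, caterpillar (y # zs)]"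

lemma caterpillar_ok: "xs \<noteq> [] \<Longrightarrow> nonroot_ok (caterpillar xs) \<and> leaves (caterpillar xs) = xs"
  by (induction xs rule: caterpillar.induct) auto

lemma branch_decomp_exists:
  assumes "finite V" and "V \<noteq> {}"
  shows "\<exists>T. branch_decomp V T"
proof -
  obtain xs where xs: "distinct xs" "set xs = V" using finite_distinct_list assms(1) by blast
  then obtain x ys where xys: "xs = x # ys" using assms(2) by (cases xs) auto
  show ?thesis
  proof (cases ys)
    case Nil
    then show ?thesis using xs xys by (intro exI[of _ "Leaf x"]) (auto simp: branch_decomp_def)
  next
    case (Cons y zs)
    then show ?thesis using xs xys caterpillar_ok[of ys]
      by (intro exI[of _ "Inner [Leaf x, caterpillar ys]"]) (auto simp: branch_decomp_def)
  qed
qed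

lemma branchwidth_props:
  assumes "finite V" and "V \<noteq> {}"
  shows "\<exists>T. branch_decomp V T \<and> f_branchwidth V f = f_width f T"
    and "branch_decomp V T \<Longrightarrow> f_branchwidth V f \<le> f_width f T"
proof -
  let ?W = "{f_width f T | T. branch_decomp V T}"
  have "?W \<subseteq> f ` Pow V"
    using width_attained cuts_subset assms(1) by fastforce
  then have fin: "finite ?W" using assms(1) by (simp add: finite_subset)
  have "?W \<noteq> {}" using branch_decomp_exists[OF assms] by blast
  then show "\<exists>T. branch_decomp V T \<and> f_branchwidth V f = f_width f T"
    using Min_in[OF fin] unfolding f_branchwidth_def by auto
  show "branch_decomp V T \<Longrightarrow> f_branchwidth V f \<le> f_width f T"
    unfolding f_branchwidth_def using Min_le[OF fin] by blast
qed

text \<open>Transfer of a cut-wise bound phi(f A) <= g A, with phi monotone, to branch widths: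
  evaluate on an optimal decomposition for g, at a cut realising its f-width.\<close>
lemma branchwidth_transfer:
  fixes \<phi> :: "nat \<Rightarrow> real"
  assumes "finite V" and "V \<noteq> {}" and "mono \<phi>"
    and cutwise: "\<And>A. A \<subseteq> V \<Longrightarrow> \<phi> (f A) \<le> real (g A)"
  shows "\<phi> (f_branchwidth V f) \<le> real (f_branchwidth V g)"
proof -
  obtain T where T: "branch_decomp V T" "f_branchwidth V g = f_width g T"
    using branchwidth_props(1)[OF assms(1,2)] by blast
  obtain A where A: "A \<in> cuts T" "f_width f T = f A"
    using width_attained[OF T(1) assms(1)] by auto
  have "\<phi> (f_branchwidth V f) \<le> \<phi> (f A)"
    using branchwidth_props(2)[OF assms(1,2) T(1), of f] A(2) \<open>mono \<phi>\<close> by (simp add: monoD)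
  also have "\<dots> \<le> real (g A)" using cutwise cuts_subset[OF T(1)] A(1) by blast
  also have "\<dots> \<le> real (f_branchwidth V g)"
    using width_ge[OF T(1) assms(1) A(1)] T(2) by simp
  finally show ?thesis .
qed

theorem lemma10:
  fixes V :: "'v set" and E :: "'v \<Rightarrow> 'v \<Rightarrow> bool"
  assumes "simple_graph V E" and "V \<noteq> {}" and "bipartite V E"
  shows "\<exists>F :: 'v cnf. cnf_wf F \<and> monotone_cnf F
           \<and> vars F \<union> clas F = V \<and> (\<forall>u v. inc_edge F u v \<longleftrightarrow> E u v)
           \<and> real (psw F) \<ge> 2 powr (real (mimw V E) / 2)"
proof -
  from assms(3) obtain P where "P \<subseteq> V" and bip: "\<forall>u v. E u v \<longrightarrow> (u \<in> P \<longleftrightarrow> v \<notin> P)"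
    unfolding bipartite_def by blast
  define F where "F = bipartite_cnf V E P"
  note F = bipartite_cnf_properties[OF assms(1) \<open>P \<subseteq> V\<close> bip, folded F_def]
  have "finite V" using assms(1) by (simp add: simple_graph_def)
  have "mono (\<lambda>n::nat. 2 powr (real n / 2))"
    by (auto intro!: monoI powr_mono)
  then have "2 powr (real (mimw V E) / 2) \<le> real (f_branchwidth V (ps F))"
    unfolding mimw_def
    using branchwidth_transfer[OF \<open>finite V\<close> assms(2)]
      ps_ge_mim[OF assms(1) bip] F_def by blast
  then show ?thesis
    using F unfolding psw_def by (intro exI[of _ F]) auto
qed

end
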